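(* Let $\Gamma$ and $\Delta$ be LJB-contexts, $A$ a formula and $V$ a set of variables such that $A$ has no free variable in $V$. Let $\Sigma_1\vdash E_1$ be a flattening of the LJB-sequent $\Gamma,[\Delta]_V\vdash A$ and $\Sigma_2\vdash E_2$ a flattening of $[\Gamma]_V,[\Delta]_V\vdash A$. Then $\Sigma_1\vdash E_1$ and $\Sigma_2\vdash E_2$ are $\overline{\alpha}$-equivalent.
   Context: Formulas of minimal predicate logic: $A ::= P(t_1,\dots,t_n)\mid A\rightarrow A\mid \forall x\,A$ with first-order terms $t ::= x\mid f(t_1,\dots,t_n)$. LJ$^{+}$-sequent: finite multiset of formulas $\vdash$ formula. LJB-contexts and items: an LJB-context is a finite multiset of items; an item is a formula or $[\Gamma]_V$ with $V$ a finite set of variables (bound by the bracket) and $\Gamma$ an LJB-context; $FV([\Gamma]_V)=FV(\Gamma)\setminus V$. An LJB-sequent $\Gamma\vdash A$ is an LJB-context and a formula. A fresh $\alpha$-variant of an LJB-sequent is an $\alpha$-equivalent LJB-sequent (renaming variables bound by quantifiers or brackets) in which bound variables are pairwise distinct and distinct from free variables; a flattening of an LJB-sequent is an LJ$^{+}$-sequent obtained by erasing all brackets in a fresh $\alpha$-variant of it. Two LJ$^{+}$-sequents $\Gamma\vdash A$ and $\Gamma'\vdash A'$ are $\overline{\alpha}$-equivalent if there exist substitutions $\sigma,\sigma'$ (renamings of variables, so that the two sequents differ only by names of bound and free variables) such that $\sigma(\Gamma\vdash A)$ is $\alpha$-equivalent to $\Gamma'\vdash A'$ and $\sigma'(\Gamma'\vdash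 A')$ is $\alpha$-equivalent to $\Gamma\vdash A$. *)

theory Defs
  imports Main "HOL-Library.Multiset" "HOL-Library.FSet"
begin

text \<open>Variables are natural numbers (an infinite supply); function symbols
  have type 'f, predicate symbols type 'p.\<close>

datatype 'f trm = Var nat | Fn 'f "'f trm list"

datatype ('f, 'p) fm = Pred 'p "'f trm list" | Imp "('f, 'p) fm" "('f, 'p) fm" | All nat "('f, 'p) fm"

text \<open>LJB items: a formula, or a bracket [Gamma]_V binding the finite set V.
  LJB contexts are finite multisets of items.\<close>

datatype ('f, 'p) item = Fm "('f, 'p) fm" | Br "nat fset" "('f, 'p) item multiset"

type_synonym ('f, 'p) ljb_ctx = "('f, 'p) item multiset"
type_synonym ('f, 'p) ljb_seq = "('f, 'p) item multiset \<times> ('f, 'p) fm"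
type_synonym ('f, 'p) lj_seq = "('f, 'p) fm multiset \<times> ('f, 'p) fm"

primrec fv_trm :: "'f trm \<Rightarrow> nat set" where
  "fv_trm (Var x) = {x}"
| "fv_trm (Fn f ts) = \<Union> (set (map fv_trm ts))"

primrec fv_fm :: "('f, 'p) fm \<Rightarrow> nat set" where
  "fv_fm (Pred P ts) = \<Union> (set (map fv_trm ts))"
| "fv_fm (Imp A B) = fv_fm A \<union> fv_fm B"
| "fv_fm (All x A) = fv_fm A - {x}"

primrec fv_item :: "('f, 'p) item \<Rightarrow> nat set" where
  "fv_item (Fm A) = fv_fm A"
| "fv_item (Br V G) = \<Union> (set_mset (image_mset fv_item G)) - fset V"

definition fv_ctx :: "('f, 'p) ljb_ctx \<Rightarrow> nat set" where
  "fv_ctx G = \<Union> (fv_item ` set_mset G)"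

text \<open>Bound-variable occurrences, counted with multiplicity (one per binding).\<close>

primrec bnd_fm :: "('f, 'p) fm \<Rightarrow> nat multiset" where
  "bnd_fm (Pred P ts) = {#}"
| "bnd_fm (Imp A B) = bnd_fm A + bnd_fm B"
| "bnd_fm (All x A) = {#x#} + bnd_fm A"

primrec bnd_item :: "('f, 'p) item \<Rightarrow> nat multiset" where
  "bnd_item (Fm A) = bnd_fm A"
| "bnd_item (Br V G) = mset_set (fset V) + sum_mset (image_mset bnd_item G)"

definition bnd_ctx :: "('f, 'p) ljb_ctx \<Rightarrow> nat multiset" where
  "bnd_ctx G = sum_mset (image_mset bnd_item G)"

text \<open>An environment is a stack of binder layers; each layer relates the variables
  bound by corresponding binders on the left and on the right (a bijection).
  aeq_fm A sigma [] B means: B is alpha-equivalent to the capture-avoiding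
  renaming sigma(A) of the free variables of A. With sigma = id this is plain
  alpha-equivalence.\<close>

type_synonym env = "(nat \<times> nat) set list"

fun veq :: "(nat \<Rightarrow> nat) \<Rightarrow> env \<Rightarrow> nat \<Rightarrow> nat \<Rightarrow> bool" where
  "veq \<sigma> [] x y = (\<sigma> x = y)"
| "veq \<sigma> (R # E) x y =
     (if x \<in> Domain R \<or> y \<in> Range R then (x, y) \<in> R else veq \<sigma> E x y)"

primrec aeq_trm :: "'f trm \<Rightarrow> (nat \<Rightarrow> nat) \<Rightarrow> env \<Rightarrow> 'f trm \<Rightarrow> bool" where
  "aeq_trm (Var x) \<sigma> E t = (case t of Var y \<Rightarrow> veq \<sigma> E x y | Fn _ _ \<Rightarrow> False)"
| "aeq_trm (Fn f ts) \<sigma> E t = (case t of Var _ \<Rightarrow> False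
     | Fn g us \<Rightarrow> f = g \<and> list_all2 (\<lambda>P u. P \<sigma> E u) (map aeq_trm ts) us)"

primrec aeq_fm :: "('f, 'p) fm \<Rightarrow> (nat \<Rightarrow> nat) \<Rightarrow> env \<Rightarrow> ('f, 'p) fm \<Rightarrow> bool" where
  "aeq_fm (Pred P ts) \<sigma> E B = (case B of Pred Q us \<Rightarrow>
       P = Q \<and> list_all2 (\<lambda>t u. aeq_trm t \<sigma> E u) ts us | _ \<Rightarrow> False)"
| "aeq_fm (Imp A1 A2) \<sigma> E B = (case B of Imp B1 B2 \<Rightarrow>
       aeq_fm A1 \<sigma> E B1 \<and> aeq_fm A2 \<sigma> E B2 | _ \<Rightarrow> False)"
| "aeq_fm (All x A) \<sigma> E B = (case B of All y B' \<Rightarrow>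
       aeq_fm A \<sigma> ({(x, y)} # E) B' | _ \<Rightarrow> False)"

primrec aeq_item :: "('f, 'p) item \<Rightarrow> (nat \<Rightarrow> nat) \<Rightarrow> env \<Rightarrow> ('f, 'p) item \<Rightarrow> bool" where
  "aeq_item (Fm A) \<sigma> E I = (case I of Fm B \<Rightarrow> aeq_fm A \<sigma> E B | Br _ _ \<Rightarrow> False)"
| "aeq_item (Br V G) \<sigma> E I = (case I of Fm _ \<Rightarrow> False
     | Br W H \<Rightarrow> (\<exists>f. bij_betw f (fset V) (fset W) \<and>
          rel_mset (\<lambda>P J. P \<sigma> ({(x, f x) | x. x \<in> fset V} # E) J)
                   (image_mset aeq_item G) H))"

definition aeq_ljb :: "(nat \<Rightarrow> nat) \<Rightarrow> ('f, 'p) ljb_seq \<Rightarrow> ('f, 'p) ljb_seq \<Rightarrow> bool" where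
  "aeq_ljb \<sigma> S S' \<longleftrightarrow>
     rel_mset (\<lambda>I J. aeq_item I \<sigma> [] J) (fst S) (fst S') \<and> aeq_fm (snd S) \<sigma> [] (snd S')"

definition aeq_lj :: "(nat \<Rightarrow> nat) \<Rightarrow> ('f, 'p) lj_seq \<Rightarrow> ('f, 'p) lj_seq \<Rightarrow> bool" where
  "aeq_lj \<sigma> S S' \<longleftrightarrow>
     rel_mset (\<lambda>A B. aeq_fm A \<sigma> [] B) (fst S) (fst S') \<and> aeq_fm (snd S) \<sigma> [] (snd S')"

definition fresh_ljb :: "('f, 'p) ljb_seq \<Rightarrow> bool" where
  "fresh_ljb S \<longleftrightarrow>
     (let B = bnd_ctx (fst S) + bnd_fm (snd S) in
        (\<forall>x. count B x \<le> 1) \<and> set_mset B \<inter> (fv_ctx (fst S) \<union> fv_fm (snd S)) = {})"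

definition fresh_variant :: "('f, 'p) ljb_seq \<Rightarrow> ('f, 'p) ljb_seq \<Rightarrow> bool" where
  "fresh_variant S' S \<longleftrightarrow> aeq_ljb id S S' \<and> fresh_ljb S'"

primrec erase :: "('f, 'p) item \<Rightarrow> ('f, 'p) fm multiset" where
  "erase (Fm A) = {#A#}"
| "erase (Br V G) = sum_mset (image_mset erase G)"

definition flatten_ctx :: "('f, 'p) ljb_ctx \<Rightarrow> ('f, 'p) fm multiset" where
  "flatten_ctx G = sum_mset (image_mset erase G)"

definition is_flattening :: "('f, 'p) lj_seq \<Rightarrow> ('f, 'p) ljb_seq \<Rightarrow> bool" where
  "is_flattening T S \<longleftrightarrow>
     (\<exists>S'. fresh_variant S' S \<and> T = (flatten_ctx (fst S'), snd S'))"

definition abar_equiv :: "('f, 'p) lj_seq \<Rightarrow> ('f, 'p) lj_seq \<Rightarrow> bool" where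
  "abar_equiv S S' \<longleftrightarrow> (\<exists>\<sigma> \<sigma>'. aeq_lj \<sigma> S S' \<and> aeq_lj \<sigma>' S' S)"

end

theory Submission
  imports Defs
begin

(* Both flattenings erase the brackets of fresh alpha-variants, so they agree up to the names
   of the formerly bracket-bound variables, with one genuine exception: in [\<Gamma>]_V the free
   occurrences of V in \<Gamma> are captured by the bracket and renamed, whereas in \<Gamma>, [\<Delta>]_V
   they stay free. The key fact is that two alpha-variants of one context, the first of them
   fresh, have flattenings related by a substitution that follows the bracket bijections on
   the variables bound in the first variant and is prescribed on all other variables;
   freshness keeps the bound variables of distinct items apart, so the substitutions obtained
   item by item can be glued. For the two flattenings this yields the renaming of V into the
   variables of the bracket [\<Gamma>]_V in one direction and its inverse in the other; as A has
   no free variable in V, the succedent is unaffected. *)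

section \<open>Alpha-equivalence\<close>

lemma list_all2_common_source:
  "list_all2 R ts us \<Longrightarrow> list_all2 S ts vs \<Longrightarrow>
   list_all2 (\<lambda>u v. \<exists>t\<in>set ts. R t u \<and> S t v) us vs"
  unfolding list_all2_conv_all_nth by (metis nth_mem)

lemma rel_mset_common_source:
  "rel_mset R G G1 \<Longrightarrow> rel_mset S G G2 \<Longrightarrow>
   rel_mset (\<lambda>J1 J2. \<exists>J\<in>#G. R J J1 \<and> S J J2) G1 G2"
proof (induction G arbitrary: G1 G2)
  case empty
  then show ?case by simp
next
  case (add J G)
  obtain G1' J1 where G1: "G1 = add_mset J1 G1'" "R J J1" "rel_mset R G G1'"
    using msed_rel_invL[OF add.prems(1)] by blast
  obtain G2' J2 where G2: "G2 = add_mset J2 G2'" "S J J2" "rel_mset S G G2'"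
    using msed_rel_invL[OF add.prems(2)] by blast
  have "rel_mset (\<lambda>J1 J2. \<exists>J'\<in>#add_mset J G. R J' J1 \<and> S J' J2) G1' G2'"
    using add.IH[OF G1(3) G2(3)] by (rule multiset.rel_mono_strong) auto
  then show ?case
    using G1 G2 by (auto intro: rel_mset_Plus)
qed

lemma rel_mset_union:
  "rel_mset R M1 N1 \<Longrightarrow> rel_mset R M2 N2 \<Longrightarrow> rel_mset R (M1 + M2) (N1 + N2)"
proof (induction M1 arbitrary: N1)
  case empty
  then show ?case by simp
next
  case (add a M)
  then show ?case
    by (auto simp: rel_mset_Plus dest!: msed_rel_invL)
qed

lemma aeq_trm_FnE:
  assumes "aeq_trm (Fn f ts) \<sigma> E u"
  obtains us where "u = Fn f us" "list_all2 (\<lambda>t u. aeq_trm t \<sigma> E u) ts us"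
  using assms by (cases u) (auto simp: list_all2_map1)

lemma aeq_trm_common_source:
  assumes "aeq_trm t \<sigma>1 E1 u" "aeq_trm t \<sigma>2 E2 v"
    and "\<And>x y z. x \<in> fv_trm t \<Longrightarrow> veq \<sigma>1 E1 x y \<Longrightarrow> veq \<sigma>2 E2 x z \<Longrightarrow> veq \<tau> E3 y z"
  shows "aeq_trm u \<tau> E3 v"
  using assms
proof (induction t arbitrary: u v)
  case (Var x)
  then show ?case by (cases u; cases v) auto
next
  case (Fn f ts)
  obtain us where u: "u = Fn f us" "list_all2 (\<lambda>t u. aeq_trm t \<sigma>1 E1 u) ts us"
    using Fn.prems(1) by (rule aeq_trm_FnE)
  obtain vs where v: "v = Fn f vs" "list_all2 (\<lambda>t v. aeq_trm t \<sigma>2 E2 v) ts vs"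
    using Fn.prems(2) by (rule aeq_trm_FnE)
  have "list_all2 (\<lambda>u v. \<exists>t\<in>set ts. aeq_trm t \<sigma>1 E1 u \<and> aeq_trm t \<sigma>2 E2 v) us vs"
    using u(2) v(2) by (rule list_all2_common_source)
  then have "list_all2 (\<lambda>u v. aeq_trm u \<tau> E3 v) us vs"
  proof (rule list.rel_mono_strong)
    fix u v
    assume "\<exists>t\<in>set ts. aeq_trm t \<sigma>1 E1 u \<and> aeq_trm t \<sigma>2 E2 v"
    then obtain t where t: "t \<in> set ts" "aeq_trm t \<sigma>1 E1 u" "aeq_trm t \<sigma>2 E2 v"
      by blast
    show "aeq_trm u \<tau> E3 v"
      by (rule Fn.IH[OF t], rule Fn.prems(3)) (use t(1) in auto)
  qed
  then show ?case
    using u v by (simp add: list_all2_map1)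
qed

lemma aeq_fm_common_source:
  assumes "aeq_fm A \<sigma>1 E1 B" "aeq_fm A \<sigma>2 E2 C"
    and "\<And>x y z. x \<in> fv_fm A \<Longrightarrow> veq \<sigma>1 E1 x y \<Longrightarrow> veq \<sigma>2 E2 x z \<Longrightarrow> veq \<tau> E3 y z"
  shows "aeq_fm B \<tau> E3 C"
  using assms
proof (induction A arbitrary: B C E1 E2 E3)
  case (Pred P ts)
  obtain us where B: "B = Pred P us" "list_all2 (\<lambda>t u. aeq_trm t \<sigma>1 E1 u) ts us"
    using Pred.prems(1) by (cases B) auto
  obtain vs where C: "C = Pred P vs" "list_all2 (\<lambda>t v. aeq_trm t \<sigma>2 E2 v) ts vs"
    using Pred.prems(2) by (cases C) auto
  have "list_all2 (\<lambda>u v. \<exists>t\<in>set ts. aeq_trm t \<sigma>1 E1 u \<and> aeq_trm t \<sigma>2 E2 v) us vs"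
    using B(2) C(2) by (rule list_all2_common_source)
  then have "list_all2 (\<lambda>u v. aeq_trm u \<tau> E3 v) us vs"
  proof (rule list.rel_mono_strong)
    fix u v
    assume "\<exists>t\<in>set ts. aeq_trm t \<sigma>1 E1 u \<and> aeq_trm t \<sigma>2 E2 v"
    then obtain t where t: "t \<in> set ts" "aeq_trm t \<sigma>1 E1 u" "aeq_trm t \<sigma>2 E2 v"
      by blast
    show "aeq_trm u \<tau> E3 v"
      by (rule aeq_trm_common_source[OF t(2,3)], rule Pred.prems(3)) (use t(1) in auto)
  qed
  then show ?case
    using B(1) C(1) by simp
next
  case (Imp A1 A2)
  obtain B1 B2 C1 C2 where BC: "B = Imp B1 B2" "C = Imp C1 C2"
    "aeq_fm A1 \<sigma>1 E1 B1" "aeq_fm A2 \<sigma>1 E1 B2" "aeq_fm A1 \<sigma>2 E2 C1" "aeq_fm A2 \<sigma>2 E2 C2"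
    using Imp.prems(1,2) by (cases B; cases C) auto
  have "aeq_fm B1 \<tau> E3 C1" "aeq_fm B2 \<tau> E3 C2"
    by (rule Imp.IH(1)[OF BC(3,5)] Imp.IH(2)[OF BC(4,6)], rule Imp.prems(3), auto)+
  then show ?case
    using BC by simp
next
  case (All x A)
  obtain y B' z C' where "B = All y B'" "C = All z C'"
    "aeq_fm A \<sigma>1 ({(x, y)} # E1) B'" "aeq_fm A \<sigma>2 ({(x, z)} # E2) C'"
    using All.prems(1,2) by (cases B; cases C) auto
  moreover have "aeq_fm B' \<tau> ({(y, z)} # E3) C'"
  proof (rule All.IH[OF calculation(3,4)])
    fix x' y' z'
    assume x': "x' \<in> fv_fm A"
      and v1: "veq \<sigma>1 ({(x, y)} # E1) x' y'" and v2: "veq \<sigma>2 ({(x, z)} # E2) x' z'"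
    show "veq \<tau> ({(y, z)} # E3) y' z'"
    proof (cases "x' = x")
      case True
      then show ?thesis using v1 v2 by simp
    next
      case False
      then have "y' \<noteq> y" "z' \<noteq> z" "veq \<sigma>1 E1 x' y'" "veq \<sigma>2 E2 x' z'"
        using v1 v2 by (auto split: if_splits)
      moreover have "veq \<tau> E3 y' z'"
        by (rule All.prems(3)) (use x' False calculation in auto)
      ultimately show ?thesis by simp
    qed
  qed
  ultimately show ?case by simp
qed


lemma aeq_trm_mono:
  assumes "aeq_trm t \<sigma> E u" "\<And>x y. x \<in> fv_trm t \<Longrightarrow> veq \<sigma> E x y \<Longrightarrow> veq \<sigma>' E' x y"
  shows "aeq_trm t \<sigma>' E' u"
  using assms
proof (induction t arbitrary: u)
  case (Var x)
  then show ?case by (cases u) auto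
next
  case (Fn f ts)
  obtain us where u: "u = Fn f us" "list_all2 (\<lambda>t u. aeq_trm t \<sigma> E u) ts us"
    using Fn.prems(1) by (rule aeq_trm_FnE)
  have "list_all2 (\<lambda>t u. aeq_trm t \<sigma>' E' u) ts us"
    using u(2) by (rule list.rel_mono_strong) (rule Fn.IH, assumption+, rule Fn.prems(2), auto)
  then show ?case
    using u(1) by (simp add: list_all2_map1)
qed

lemma aeq_fm_mono:
  assumes "aeq_fm A \<sigma> E B" "\<And>x y. x \<in> fv_fm A \<Longrightarrow> veq \<sigma> E x y \<Longrightarrow> veq \<sigma>' E' x y"
  shows "aeq_fm A \<sigma>' E' B"
  using assms
proof (induction A arbitrary: B E E')
  case (Pred P ts)
  obtain us where B: "B = Pred P us" "list_all2 (\<lambda>t u. aeq_trm t \<sigma> E u) ts us"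
    using Pred.prems(1) by (cases B) auto
  have "list_all2 (\<lambda>t u. aeq_trm t \<sigma>' E' u) ts us"
    using B(2)
    by (rule list.rel_mono_strong) (rule aeq_trm_mono, assumption, rule Pred.prems(2), auto)
  then show ?case
    using B(1) by simp
next
  case (Imp A1 A2)
  obtain B1 B2 where B: "B = Imp B1 B2" "aeq_fm A1 \<sigma> E B1" "aeq_fm A2 \<sigma> E B2"
    using Imp.prems(1) by (cases B) auto
  have "aeq_fm A1 \<sigma>' E' B1" "aeq_fm A2 \<sigma>' E' B2"
    by (rule Imp.IH(1)[OF B(2)] Imp.IH(2)[OF B(3)], rule Imp.prems(2), auto)+
  then show ?case
    using B(1) by simp
next
  case (All x A)
  obtain y B' where B: "B = All y B'" "aeq_fm A \<sigma> ({(x, y)} # E) B'"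
    using All.prems(1) by (cases B) auto
  have "aeq_fm A \<sigma>' ({(x, y)} # E') B'"
  proof (rule All.IH[OF B(2)])
    fix x' y'
    assume x': "x' \<in> fv_fm A" and v: "veq \<sigma> ({(x, y)} # E) x' y'"
    show "veq \<sigma>' ({(x, y)} # E') x' y'"
    proof (cases "x' = x")
      case True
      then show ?thesis using v by simp
    next
      case False
      then have "y' \<noteq> y" "veq \<sigma> E x' y'"
        using v by (auto split: if_splits)
      moreover have "veq \<sigma>' E' x' y'"
        by (rule All.prems(2)) (use x' False calculation in auto)
      ultimately show ?thesis
        using False by simp
    qed
  qed
  then show ?case
    using B(1) by simp
qed

lemma aeq_trm_fv:
  assumes "aeq_trm t \<sigma> E u" "x \<in> fv_trm t"
  shows "\<exists>y. veq \<sigma> E x y \<and> y \<in> fv_trm u"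
  using assms
proof (induction t arbitrary: u)
  case (Var x)
  then show ?case by (cases u) auto
next
  case (Fn f ts)
  obtain us where u: "u = Fn f us" "list_all2 (\<lambda>t u. aeq_trm t \<sigma> E u) ts us"
    using Fn.prems(1) by (rule aeq_trm_FnE)
  obtain i where i: "i < length ts" "x \<in> fv_trm (ts ! i)"
    using Fn.prems(2) by (auto simp: in_set_conv_nth)
  have "aeq_trm (ts ! i) \<sigma> E (us ! i)" "us ! i \<in> set us"
    using u(2) i(1) by (auto simp: list_all2_conv_all_nth)
  then show ?case
    using Fn.IH[of "ts ! i"] i u(1) by fastforce
qed

lemma aeq_fm_fv:
  assumes "aeq_fm A \<sigma> E B" "x \<in> fv_fm A"
  shows "\<exists>y. veq \<sigma> E x y \<and> y \<in> fv_fm B"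
  using assms
proof (induction A arbitrary: B E)
  case (Pred P ts)
  obtain us where B: "B = Pred P us" "list_all2 (\<lambda>t u. aeq_trm t \<sigma> E u) ts us"
    using Pred.prems(1) by (cases B) auto
  obtain i where i: "i < length ts" "x \<in> fv_trm (ts ! i)"
    using Pred.prems(2) by (auto simp: in_set_conv_nth)
  have "aeq_trm (ts ! i) \<sigma> E (us ! i)" "us ! i \<in> set us"
    using B(2) i(1) by (auto simp: list_all2_conv_all_nth)
  then show ?case
    using aeq_trm_fv i(2) B(1) by fastforce
next
  case (Imp A1 A2)
  obtain B1 B2 where B: "B = Imp B1 B2" "aeq_fm A1 \<sigma> E B1" "aeq_fm A2 \<sigma> E B2"
    using Imp.prems(1) by (cases B) auto
  show ?case
    using Imp.prems(2) Imp.IH(1)[OF B(2)] Imp.IH(2)[OF B(3)] B(1) by auto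
next
  case (All x0 A)
  obtain y0 B' where B: "B = All y0 B'" "aeq_fm A \<sigma> ({(x0, y0)} # E) B'"
    using All.prems(1) by (cases B) auto
  have "x \<in> fv_fm A" "x \<noteq> x0"
    using All.prems(2) by auto
  then obtain y where "veq \<sigma> ({(x0, y0)} # E) x y" "y \<in> fv_fm B'"
    using All.IH[OF B(2)] by blast
  then show ?case
    using \<open>x \<noteq> x0\<close> B(1) by (auto split: if_splits)
qed

abbreviation layer :: "(nat \<Rightarrow> nat) \<Rightarrow> nat set \<Rightarrow> (nat \<times> nat) set" where
  "layer f V \<equiv> {(x, f x) | x. x \<in> V}"

lemma veq_layer_iff:
  "veq \<sigma> (layer f V # E) x y \<longleftrightarrow> (x \<in> V \<and> y = f x) \<or> (x \<notin> V \<and> y \<notin> f ` V \<and> veq \<sigma> E x y)"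
proof -
  have "Domain (layer f V) = V" "Range (layer f V) = f ` V" by auto
  then show ?thesis by auto
qed

declare veq.simps(2) [simp del] veq_layer_iff [simp]

lemma veq_layer_compat:
  assumes "inj_on f V" "veq \<sigma>1 (layer f V # E1) x y" "veq \<sigma>2 (layer g V # E2) x z"
    and "x \<notin> V \<Longrightarrow> y \<notin> f ` V \<Longrightarrow> veq \<sigma>1 E1 x y \<Longrightarrow> veq \<sigma>2 E2 x z \<Longrightarrow> \<tau> y = z"
  shows "(if y \<in> f ` V then g (inv_into V f y) else \<tau> y) = z"
proof -
  have "(x \<in> V \<and> y = f x) \<or> (x \<notin> V \<and> y \<notin> f ` V \<and> veq \<sigma>1 E1 x y)"
    "(x \<in> V \<and> z = g x) \<or> (x \<notin> V \<and> z \<notin> g ` V \<and> veq \<sigma>2 E2 x z)"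
    using assms(2,3) by (simp_all only: veq_layer_iff)
  then show ?thesis
    using assms(1,4) by (auto simp: inj_on_eq_iff)
qed

abbreviation aeq_ctx :: "('f, 'p) ljb_ctx \<Rightarrow> (nat \<Rightarrow> nat) \<Rightarrow> env \<Rightarrow> ('f, 'p) ljb_ctx \<Rightarrow> bool" where
  "aeq_ctx G \<sigma> E H \<equiv> rel_mset (\<lambda>J K. aeq_item J \<sigma> E K) G H"

abbreviation aeq_fms :: "('f, 'p) fm multiset \<Rightarrow> (nat \<Rightarrow> nat) \<Rightarrow> ('f, 'p) fm multiset \<Rightarrow> bool" where
  "aeq_fms M \<sigma> N \<equiv> rel_mset (\<lambda>A B. aeq_fm A \<sigma> [] B) M N"

lemma aeq_fms_cong:
  assumes "aeq_fms M \<sigma> N" "\<And>A x. A \<in># M \<Longrightarrow> x \<in> fv_fm A \<Longrightarrow> \<sigma> x = \<sigma>' x"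
  shows "aeq_fms M \<sigma>' N"
  using assms(1)
proof (rule multiset.rel_mono_strong)
  fix A B
  assume A: "A \<in># M" and B: "aeq_fm A \<sigma> [] B"
  show "aeq_fm A \<sigma>' [] B"
    using B by (rule aeq_fm_mono) (simp add: assms(2)[OF A])
qed

lemma aeq_item_BrE:
  assumes "aeq_item (Br V G) \<sigma> E I"
  obtains W f H where "I = Br W H" "bij_betw f (fset V) (fset W)"
    "aeq_ctx G \<sigma> (layer f (fset V) # E) H"
  using assms by (cases I) (auto simp: multiset.rel_map)

section \<open>Contexts and freshness\<close>

lemma fv_ctx_simps [simp]:
  "fv_ctx {#} = {}" "fv_ctx (add_mset J G) = fv_item J \<union> fv_ctx G"
  "fv_ctx (G + H) = fv_ctx G \<union> fv_ctx H"
  by (simp_all add: fv_ctx_def)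

lemma bnd_ctx_simps [simp]:
  "bnd_ctx {#} = {#}" "bnd_ctx (add_mset J G) = bnd_item J + bnd_ctx G"
  "bnd_ctx (G + H) = bnd_ctx G + bnd_ctx H"
  by (simp_all add: bnd_ctx_def)

lemma flatten_ctx_simps [simp]:
  "flatten_ctx {#} = {#}" "flatten_ctx (add_mset J G) = erase J + flatten_ctx G"
  "flatten_ctx (G + H) = flatten_ctx G + flatten_ctx H"
  by (simp_all add: flatten_ctx_def)

lemma Br_simps [simp]:
  "fv_item (Br V G) = fv_ctx G - fset V"
  "bnd_item (Br V G) = mset_set (fset V) + bnd_ctx G"
  "erase (Br V G) = flatten_ctx G"
  by (simp_all add: fv_ctx_def bnd_ctx_def flatten_ctx_def)

declare fv_item.simps(2) [simp del] bnd_item.simps(2) [simp del] erase.simps(2) [simp del]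

lemma count_le_1_disjoint:
  assumes "\<And>x. count (M + N) x \<le> 1"
  shows "set_mset M \<inter> set_mset N = {}"
proof (rule ccontr)
  assume "set_mset M \<inter> set_mset N \<noteq> {}"
  then obtain x where "x \<in># M" "x \<in># N"
    by auto
  then have "count M x \<ge> 1" "count N x \<ge> 1"
    by (simp_all add: Suc_le_eq)
  then show False
    using assms[of x] unfolding count_union by linarith
qed

definition fresh_ctx :: "('f, 'p) ljb_ctx \<Rightarrow> bool" where
  "fresh_ctx G \<longleftrightarrow> (\<forall>x. count (bnd_ctx G) x \<le> 1) \<and> fv_ctx G \<inter> set_mset (bnd_ctx G) = {}"

lemma fresh_ctx_unionD:
  assumes "fresh_ctx (G + H)"
  shows "fresh_ctx G"
proof -
  have "count (bnd_ctx G) x \<le> 1" for x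
    using assms unfolding fresh_ctx_def by (metis add_leE bnd_ctx_simps(3) count_union)
  moreover have "fv_ctx G \<inter> set_mset (bnd_ctx G) = {}"
    using assms unfolding fresh_ctx_def by auto
  ultimately show ?thesis
    unfolding fresh_ctx_def by blast
qed

lemma fresh_ctx_subset: "G \<subseteq># H \<Longrightarrow> fresh_ctx H \<Longrightarrow> fresh_ctx G"
  using fresh_ctx_unionD[of G "H - G"] by (simp add: subset_mset.add_diff_inverse)

lemma in_flatten_ctx: "A \<in># flatten_ctx G \<longleftrightarrow> (\<exists>J\<in>#G. A \<in># erase J)"
  by (induction G) auto

lemma fv_item_le_fv_ctx: "J \<in># G \<Longrightarrow> fv_item J \<subseteq> fv_ctx G"
  by (auto simp: fv_ctx_def)

lemma bnd_item_le_bnd_ctx: "J \<in># G \<Longrightarrow> bnd_item J \<subseteq># bnd_ctx G"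
  by (metis bnd_ctx_simps(2) insert_DiffM mset_subset_eq_add_left)

lemma fv_erase: "A \<in># erase J \<Longrightarrow> fv_fm A \<subseteq> fv_item J \<union> set_mset (bnd_item J)"
proof (induction J arbitrary: A)
  case (Fm B)
  then show ?case by simp
next
  case (Br V G)
  then obtain K where K: "K \<in># G" "A \<in># erase K"
    by (auto simp: in_flatten_ctx)
  then have "fv_fm A \<subseteq> fv_item K \<union> set_mset (bnd_item K)"
    using Br.IH by blast
  moreover have "fv_item K \<subseteq> fv_item (Br V G) \<union> fset V"
    using fv_item_le_fv_ctx[OF K(1)] by auto
  moreover have "set_mset (bnd_item K) \<subseteq> set_mset (bnd_item (Br V G))"
    using bnd_item_le_bnd_ctx[OF K(1)] by (auto dest: mset_subset_eqD)
  ultimately show ?case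
    by auto
qed

lemma fv_flatten_ctx: "A \<in># flatten_ctx G \<Longrightarrow> fv_fm A \<subseteq> fv_ctx G \<union> set_mset (bnd_ctx G)"
  using fv_erase fv_item_le_fv_ctx bnd_item_le_bnd_ctx
  by (fastforce simp: in_flatten_ctx dest: mset_subset_eqD)

lemma fresh_ctx_BrD:
  assumes "fresh_ctx {#Br W H#}"
  shows "fresh_ctx H"
proof -
  have count: "count (mset_set (fset W) + bnd_ctx H) x \<le> 1" for x
    using assms unfolding fresh_ctx_def by simp
  then have "count (bnd_ctx H) x \<le> 1" for x
    by (metis add_leE count_union)
  moreover have "fset W \<inter> set_mset (bnd_ctx H) = {}"
    using count_le_1_disjoint[OF count] by simp
  moreover have "(fv_ctx H - fset W) \<inter> set_mset (bnd_ctx H) = {}"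
    using assms unfolding fresh_ctx_def by auto
  ultimately show ?thesis
    unfolding fresh_ctx_def by blast
qed

lemma fresh_ctx_separated:
  assumes "fresh_ctx (G + H)" "A \<in># flatten_ctx G"
  shows "fv_fm A \<inter> set_mset (bnd_ctx H) = {}"
proof -
  have "set_mset (bnd_ctx G) \<inter> set_mset (bnd_ctx H) = {}"
    using assms(1) unfolding fresh_ctx_def by (intro count_le_1_disjoint) simp
  moreover have "fv_ctx G \<inter> set_mset (bnd_ctx H) = {}"
    using assms(1) unfolding fresh_ctx_def by auto
  ultimately show ?thesis
    using fv_flatten_ctx[OF assms(2)] by blast
qed

section \<open>Flattenings of alpha-variants\<close>

definition flatten_renames :: "(nat \<Rightarrow> nat) \<Rightarrow> ('f, 'p) ljb_ctx \<Rightarrow> ('f, 'p) fm multiset \<Rightarrow> bool" where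
  "flatten_renames \<tau> G M \<longleftrightarrow> (\<exists>\<sigma>. (\<forall>x. x \<notin># bnd_ctx G \<longrightarrow> \<sigma> x = \<tau> x) \<and>
     aeq_fms (flatten_ctx G) \<sigma> M)"

lemma flatten_renames_empty: "flatten_renames \<tau> {#} {#}"
  unfolding flatten_renames_def by (rule exI[of _ \<tau>]) simp

lemma flatten_renames_union:
  assumes "fresh_ctx (G + H)" "flatten_renames \<tau> G M" "flatten_renames \<tau> H N"
  shows "flatten_renames \<tau> (G + H) (M + N)"
proof -
  obtain \<sigma>1 where \<sigma>1: "\<forall>x. x \<notin># bnd_ctx G \<longrightarrow> \<sigma>1 x = \<tau> x"
    "aeq_fms (flatten_ctx G) \<sigma>1 M"
    using assms(2) unfolding flatten_renames_def by blast
  obtain \<sigma>2 where \<sigma>2: "\<forall>x. x \<notin># bnd_ctx H \<longrightarrow> \<sigma>2 x = \<tau> x"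
    "aeq_fms (flatten_ctx H) \<sigma>2 N"
    using assms(3) unfolding flatten_renames_def by blast
  define \<sigma> where "\<sigma> x = (if x \<in># bnd_ctx G then \<sigma>1 x else \<sigma>2 x)" for x
  have "aeq_fms (flatten_ctx G) \<sigma> M"
  proof (rule aeq_fms_cong[OF \<sigma>1(2)])
    fix A x
    assume "A \<in># flatten_ctx G" "x \<in> fv_fm A"
    then have "x \<notin># bnd_ctx H"
      using fresh_ctx_separated[OF assms(1)] by blast
    then show "\<sigma>1 x = \<sigma> x"
      using \<sigma>1(1) \<sigma>2(1) unfolding \<sigma>_def by auto
  qed
  moreover have "aeq_fms (flatten_ctx H) \<sigma> N"
  proof (rule aeq_fms_cong[OF \<sigma>2(2)])
    fix A x
    assume "A \<in># flatten_ctx H" "x \<in> fv_fm A"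
    moreover have "fresh_ctx (H + G)"
      using assms(1) by (simp add: add.commute)
    ultimately have "x \<notin># bnd_ctx G"
      using fresh_ctx_separated by blast
    then show "\<sigma>2 x = \<sigma> x"
      unfolding \<sigma>_def by simp
  qed
  moreover have "\<forall>x. x \<notin># bnd_ctx (G + H) \<longrightarrow> \<sigma> x = \<tau> x"
    using \<sigma>2(1) unfolding \<sigma>_def by simp
  ultimately show ?thesis
    unfolding flatten_renames_def by (auto intro: rel_mset_union)
qed

lemma flatten_renames_Br:
  assumes "flatten_renames \<tau>' H M" "\<And>x. x \<notin> fset W \<Longrightarrow> \<tau>' x = \<tau> x"
  shows "flatten_renames \<tau> {#Br W H#} M"
proof -
  obtain \<sigma> where "\<forall>x. x \<notin># bnd_ctx H \<longrightarrow> \<sigma> x = \<tau>' x"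
    "aeq_fms (flatten_ctx H) \<sigma> M"
    using assms(1) unfolding flatten_renames_def by blast
  then show ?thesis
    using assms(2) unfolding flatten_renames_def by (intro exI[of _ \<sigma>]) auto
qed

lemma flatten_renames_of_items:
  assumes "rel_mset (\<lambda>J K. flatten_renames \<tau> {#J#} (erase K)) G H" "fresh_ctx G"
  shows "flatten_renames \<tau> G (flatten_ctx H)"
  using assms
proof (induction G arbitrary: H)
  case empty
  then show ?case by (simp add: flatten_renames_empty)
next
  case (add J G)
  obtain K H' where H: "H = add_mset K H'" "flatten_renames \<tau> {#J#} (erase K)"
    "rel_mset (\<lambda>J K. flatten_renames \<tau> {#J#} (erase K)) G H'"
    using msed_rel_invL[OF add.prems(1)] by blast
  have fresh: "fresh_ctx ({#J#} + G)"
    using add.prems(2) by simp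
  have "flatten_renames \<tau> G (flatten_ctx H')"
    using add.IH[OF H(3)] fresh_ctx_unionD[of G "{#J#}"] fresh by (simp add: add.commute)
  with fresh H(2) have "flatten_renames \<tau> ({#J#} + G) (erase K + flatten_ctx H')"
    by (rule flatten_renames_union)
  then show ?case
    using H(1) by simp
qed

lemma flatten_renames_from_items:
  assumes "aeq_ctx G \<sigma>1 E1 G1" "aeq_ctx G \<sigma>2 E2 G2"
    and "fresh_ctx G1"
    and "\<And>J J1 J2. J \<in># G \<Longrightarrow> aeq_item J \<sigma>1 E1 J1 \<Longrightarrow> aeq_item J \<sigma>2 E2 J2 \<Longrightarrow>
      fresh_ctx {#J1#} \<Longrightarrow> flatten_renames \<tau> {#J1#} (erase J2)"
  shows "flatten_renames \<tau> G1 (flatten_ctx G2)"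
proof -
  have "rel_mset (\<lambda>J1 J2. \<exists>J\<in>#G. aeq_item J \<sigma>1 E1 J1 \<and> aeq_item J \<sigma>2 E2 J2) G1 G2"
    using assms(1,2) by (rule rel_mset_common_source)
  then have "rel_mset (\<lambda>J1 J2. flatten_renames \<tau> {#J1#} (erase J2)) G1 G2"
  proof (rule multiset.rel_mono_strong)
    fix J1 J2
    assume "J1 \<in># G1" "\<exists>J\<in>#G. aeq_item J \<sigma>1 E1 J1 \<and> aeq_item J \<sigma>2 E2 J2"
    moreover have "fresh_ctx {#J1#}"
      using \<open>J1 \<in># G1\<close> assms(3) by (simp add: fresh_ctx_subset)
    ultimately show "flatten_renames \<tau> {#J1#} (erase J2)"
      using assms(4) by blast
  qed
  then show ?thesis
    using assms(3) by (rule flatten_renames_of_items)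
qed

lemma flatten_renames_aeq_item:
  assumes "aeq_item J \<sigma>1 E1 J1" "aeq_item J \<sigma>2 E2 J2"
    and "\<And>x y z. x \<in> fv_item J \<Longrightarrow> veq \<sigma>1 E1 x y \<Longrightarrow> veq \<sigma>2 E2 x z \<Longrightarrow> \<tau> y = z"
    and "fresh_ctx {#J1#}"
  shows "flatten_renames \<tau> {#J1#} (erase J2)"
  using assms
proof (induction J arbitrary: E1 E2 J1 J2 \<tau>)
  case (Fm A)
  obtain B C where BC: "J1 = Fm B" "J2 = Fm C" "aeq_fm A \<sigma>1 E1 B" "aeq_fm A \<sigma>2 E2 C"
    using Fm.prems(1,2) by (cases J1; cases J2) auto
  have "aeq_fm B \<tau> [] C"
    using BC(3,4) by (rule aeq_fm_common_source) (use Fm.prems(3) in simp)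
  then show ?case
    unfolding flatten_renames_def using BC(1,2) by (intro exI[of _ \<tau>]) (auto intro: rel_mset_Plus)
next
  case (Br V G)
  obtain W1 f1 G1 where J1: "J1 = Br W1 G1" "bij_betw f1 (fset V) (fset W1)"
    "aeq_ctx G \<sigma>1 (layer f1 (fset V) # E1) G1"
    using Br.prems(1) by (rule aeq_item_BrE)
  obtain W2 f2 G2 where J2: "J2 = Br W2 G2"
    "aeq_ctx G \<sigma>2 (layer f2 (fset V) # E2) G2"
    using Br.prems(2) by (rule aeq_item_BrE)
  \<comment> \<open>the variable \<open>f1 x\<close> bound by the bracket of \<open>J1\<close> corresponds to \<open>f2 x\<close> in \<open>J2\<close>\<close>
  define \<tau>' where "\<tau>' y = (if y \<in> f1 ` fset V then f2 (inv_into (fset V) f1 y) else \<tau> y)" for y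
  have "flatten_renames \<tau>' G1 (flatten_ctx G2)"
  proof (rule flatten_renames_from_items[OF J1(3) J2(2)])
    show "fresh_ctx G1"
      using Br.prems(4) J1(1) by (blast intro: fresh_ctx_BrD)
    fix J K1 K2
    assume J: "J \<in># G" and K1: "aeq_item J \<sigma>1 (layer f1 (fset V) # E1) K1"
      and K2: "aeq_item J \<sigma>2 (layer f2 (fset V) # E2) K2" and fresh: "fresh_ctx {#K1#}"
    show "flatten_renames \<tau>' {#K1#} (erase K2)"
    proof (rule Br.IH[OF J K1 K2 _ fresh])
      fix x y z
      assume x: "x \<in> fv_item J" and y: "veq \<sigma>1 (layer f1 (fset V) # E1) x y"
        and z: "veq \<sigma>2 (layer f2 (fset V) # E2) x z"
      show "\<tau>' y = z"
        unfolding \<tau>'_def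
      proof (rule veq_layer_compat[OF _ y z])
        show "inj_on f1 (fset V)"
          using J1(2) by (rule bij_betw_imp_inj_on)
        assume "x \<notin> fset V" "veq \<sigma>1 E1 x y" "veq \<sigma>2 E2 x z"
        then show "\<tau> y = z"
          using x J fv_item_le_fv_ctx by (intro Br.prems(3)) auto
      qed
    qed
  qed
  then show ?case
    using J1(1,2) J2(1) unfolding \<tau>'_def
    by (auto intro: flatten_renames_Br simp: bij_betw_def)
qed

lemma flatten_renames_aeq_ctx:
  assumes "aeq_ctx G \<sigma>1 E1 G1" "aeq_ctx G \<sigma>2 E2 G2"
    and "\<And>x y z. x \<in> fv_ctx G \<Longrightarrow> veq \<sigma>1 E1 x y \<Longrightarrow> veq \<sigma>2 E2 x z \<Longrightarrow> \<tau> y = z"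
    and "fresh_ctx G1"
  shows "flatten_renames \<tau> G1 (flatten_ctx G2)"
  using assms(1,2,4)
proof (rule flatten_renames_from_items)
  fix J J1 J2
  assume "J \<in># G" "aeq_item J \<sigma>1 E1 J1" "aeq_item J \<sigma>2 E2 J2" "fresh_ctx {#J1#}"
  then show "flatten_renames \<tau> {#J1#} (erase J2)"
    using assms(3) fv_item_le_fv_ctx by (blast intro: flatten_renames_aeq_item)
qed

lemma is_flatteningE:
  assumes "is_flattening (\<Sigma>, F) (G, A)"
  obtains C where "aeq_ctx G id [] C" "aeq_fm A id [] F" "fresh_ctx C"
    "fv_fm F \<inter> set_mset (bnd_ctx C) = {}" "\<Sigma> = flatten_ctx C"
proof -
  obtain C where C: "fresh_variant (C, F) (G, A)" "\<Sigma> = flatten_ctx C"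
    using assms unfolding is_flattening_def by auto
  then have fresh: "\<forall>x. count (bnd_ctx C + bnd_fm F) x \<le> 1"
    "set_mset (bnd_ctx C + bnd_fm F) \<inter> (fv_ctx C \<union> fv_fm F) = {}"
    unfolding fresh_variant_def fresh_ljb_def by (simp_all add: Let_def)
  have "count (bnd_ctx C) x \<le> 1" for x
    using fresh(1) by (metis add_leE count_union)
  then have "fresh_ctx C"
    using fresh(2) unfolding fresh_ctx_def by auto
  moreover have "fv_fm F \<inter> set_mset (bnd_ctx C) = {}"
    using fresh(2) by auto
  ultimately show ?thesis
    using that C unfolding fresh_variant_def aeq_ljb_def by auto
qed

section \<open>Moving a context into a bracket\<close>

lemma aeq_ctx_add_BrE:
  assumes "aeq_ctx (add_mset (Br V H) G) \<sigma> E C"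
  obtains G' W f H' where "C = add_mset (Br W H') G'" "aeq_ctx G \<sigma> E G'"
    "bij_betw f (fset V) (fset W)" "aeq_ctx H \<sigma> (layer f (fset V) # E) H'"
proof -
  obtain G' I where I: "C = add_mset I G'" "aeq_item (Br V H) \<sigma> E I"
    "aeq_ctx G \<sigma> E G'"
    using msed_rel_invL[OF assms] by blast
  obtain W f H' where "I = Br W H'" "bij_betw f (fset V) (fset W)"
    "aeq_ctx H \<sigma> (layer f (fset V) # E) H'"
    using I(2) by (rule aeq_item_BrE)
  then show ?thesis
    using that I(1,3) by simp
qed

text \<open>The free occurrences of \<open>V\<close> in \<open>\<Gamma>\<close> are captured by the new bracket and renamed by \<open>g\<close>.\<close>

lemma flatten_renames_into_brackets:
  assumes "aeq_ctx \<Gamma> id [] \<Gamma>1"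
    and "aeq_ctx \<Gamma> id [layer g (fset V)] \<Gamma>2"
    and "bij_betw f (fset V) (fset W)"
    and "aeq_ctx \<Delta> id [layer f (fset V)] \<Delta>1"
    and "aeq_ctx \<Delta> id [layer h (fset V)] \<Delta>2"
    and "fresh_ctx (add_mset (Br W \<Delta>1) \<Gamma>1)"
  shows "flatten_renames (\<lambda>x. if x \<in> fset V then g x else x) (add_mset (Br W \<Delta>1) \<Gamma>1)
    (flatten_ctx \<Gamma>2 + flatten_ctx \<Delta>2)"
proof -
  have fresh: "fresh_ctx (\<Gamma>1 + {#Br W \<Delta>1#})"
    using assms(6) by simp
  define \<tau> where "\<tau> = (\<lambda>x. if x \<in> fset V then g x else x)"
  have "flatten_renames \<tau> \<Gamma>1 (flatten_ctx \<Gamma>2)"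
    using assms(1,2) _ fresh_ctx_unionD[OF fresh]
    by (rule flatten_renames_aeq_ctx) (auto simp: \<tau>_def)
  moreover have "flatten_renames \<tau> {#Br W \<Delta>1#} (flatten_ctx \<Delta>2)"
  proof (rule flatten_renames_Br)
    show "flatten_renames (\<lambda>y. if y \<in> f ` fset V then h (inv_into (fset V) f y) else \<tau> y)
        \<Delta>1 (flatten_ctx \<Delta>2)"
      using assms(4,5)
    proof (rule flatten_renames_aeq_ctx)
      show "fresh_ctx \<Delta>1"
        by (rule fresh_ctx_BrD[of W], rule fresh_ctx_subset[OF _ assms(6)]) simp
    next
      fix x y z
      assume y: "veq id [layer f (fset V)] x y" and z: "veq id [layer h (fset V)] x z"
      show "(if y \<in> f ` fset V then h (inv_into (fset V) f y) else \<tau> y) = z"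
        using assms(3) by (rule veq_layer_compat[OF bij_betw_imp_inj_on y z]) (simp add: \<tau>_def)
    qed
    show "\<And>x. x \<notin> fset W \<Longrightarrow> (if x \<in> f ` fset V then h (inv_into (fset V) f x) else \<tau> x) = \<tau> x"
      using assms(3) by (simp add: bij_betw_def)
  qed
  ultimately show ?thesis
    using flatten_renames_union[OF fresh] unfolding \<tau>_def by simp
qed

lemma flatten_renames_out_of_brackets:
  assumes "aeq_ctx \<Gamma> id [] \<Gamma>1"
    and "bij_betw g (fset V) (fset W)"
    and "aeq_ctx \<Gamma> id [layer g (fset V)] \<Gamma>2"
    and "aeq_ctx \<Delta> id [layer f (fset V)] \<Delta>1"
    and "bij_betw h (fset V) (fset W')"
    and "aeq_ctx \<Delta> id [layer h (fset V)] \<Delta>2"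
    and "fresh_ctx {#Br W \<Gamma>2, Br W' \<Delta>2#}"
  shows "flatten_renames id {#Br W \<Gamma>2, Br W' \<Delta>2#} (flatten_ctx \<Delta>1 + flatten_ctx \<Gamma>1)"
proof -
  have fresh: "fresh_ctx ({#Br W' \<Delta>2#} + {#Br W \<Gamma>2#})"
    using assms(7) by simp
  have "fresh_ctx \<Gamma>2" "fresh_ctx \<Delta>2"
    by (rule fresh_ctx_BrD[of W], rule fresh_ctx_subset[OF _ assms(7)], simp)
      (rule fresh_ctx_BrD[of W'], rule fresh_ctx_subset[OF _ assms(7)], simp)
  have \<Gamma>: "flatten_renames id {#Br W \<Gamma>2#} (flatten_ctx \<Gamma>1)"
  proof (rule flatten_renames_Br)
    show "flatten_renames (\<lambda>y. if y \<in> g ` fset V then inv_into (fset V) g y else y)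
        \<Gamma>2 (flatten_ctx \<Gamma>1)"
      using assms(3,1) _ \<open>fresh_ctx \<Gamma>2\<close>
      by (rule flatten_renames_aeq_ctx)
        (use bij_betw_imp_inj_on[OF assms(2)] in \<open>auto simp: inj_on_eq_iff\<close>)
    show "\<And>x. x \<notin> fset W \<Longrightarrow> (if x \<in> g ` fset V then inv_into (fset V) g x else x) = id x"
      using assms(2) by (simp add: bij_betw_def)
  qed
  have \<Delta>: "flatten_renames id {#Br W' \<Delta>2#} (flatten_ctx \<Delta>1)"
  proof (rule flatten_renames_Br)
    show "flatten_renames (\<lambda>y. if y \<in> h ` fset V then f (inv_into (fset V) h y) else y)
        \<Delta>2 (flatten_ctx \<Delta>1)"
      using assms(6,4) _ \<open>fresh_ctx \<Delta>2\<close>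
    proof (rule flatten_renames_aeq_ctx)
      fix x y z
      assume y: "veq id [layer h (fset V)] x y" and z: "veq id [layer f (fset V)] x z"
      show "(if y \<in> h ` fset V then f (inv_into (fset V) h y) else y) = z"
        using assms(5) by (rule veq_layer_compat[OF bij_betw_imp_inj_on y z]) simp
    qed
    show "\<And>x. x \<notin> fset W' \<Longrightarrow> (if x \<in> h ` fset V then f (inv_into (fset V) h x) else x) = id x"
      using assms(5) by (simp add: bij_betw_def)
  qed
  show ?thesis
    using flatten_renames_union[OF fresh \<Delta> \<Gamma>] by simp
qed

lemma flatten_renames_aeq_lj:
  assumes "flatten_renames \<tau> C M" "fv_fm F \<inter> set_mset (bnd_ctx C) = {}"
    and "aeq_fm A id [] F" "aeq_fm A id [] F'" "\<And>x. x \<in> fv_fm A \<Longrightarrow> \<tau> x = x"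
  shows "\<exists>\<sigma>. aeq_lj \<sigma> (flatten_ctx C, F) (M, F')"
proof -
  obtain \<sigma> where \<sigma>: "\<forall>x. x \<notin># bnd_ctx C \<longrightarrow> \<sigma> x = \<tau> x"
    "aeq_fms (flatten_ctx C) \<sigma> M"
    using assms(1) unfolding flatten_renames_def by blast
  have "aeq_fm F \<sigma> [] F'"
  proof (rule aeq_fm_common_source[OF assms(3,4)])
    fix x y z
    assume "x \<in> fv_fm A" "veq id [] x y" "veq id [] x z"
    moreover have "x \<in> fv_fm F"
      using aeq_fm_fv[OF assms(3) \<open>x \<in> fv_fm A\<close>] by simp
    ultimately show "veq \<sigma> [] y z"
      using assms(2,5) \<sigma>(1) by auto
  qed
  then show ?thesis
    using \<sigma>(2) unfolding aeq_lj_def by auto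
qed

lemma flatten_renames_bracketings:
  assumes "aeq_ctx (\<Gamma> + {#Br V \<Delta>#}) id [] C1" "aeq_ctx {#Br V \<Gamma>, Br V \<Delta>#} id [] C2"
    and "fresh_ctx C1" "fresh_ctx C2"
  obtains g where "flatten_renames (\<lambda>x. if x \<in> fset V then g x else x) C1 (flatten_ctx C2)"
    and "flatten_renames id C2 (flatten_ctx C1)"
proof -
  obtain \<Gamma>1 W1 f1 \<Delta>1 where C1: "C1 = add_mset (Br W1 \<Delta>1) \<Gamma>1"
    and \<Gamma>1: "aeq_ctx \<Gamma> id [] \<Gamma>1" and W1: "bij_betw f1 (fset V) (fset W1)"
    and \<Delta>1: "aeq_ctx \<Delta> id [layer f1 (fset V)] \<Delta>1"
    using assms(1)[simplified] by (rule aeq_ctx_add_BrE)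
  obtain C2' W2 f2 \<Gamma>2 where C2: "C2 = add_mset (Br W2 \<Gamma>2) C2'"
    and C2': "aeq_ctx {#Br V \<Delta>#} id [] C2'" and W2: "bij_betw f2 (fset V) (fset W2)"
    and \<Gamma>2: "aeq_ctx \<Gamma> id [layer f2 (fset V)] \<Gamma>2"
    using assms(2) by (rule aeq_ctx_add_BrE)
  obtain W3 f3 \<Delta>3 where C2'_eq: "C2' = {#Br W3 \<Delta>3#}" and W3: "bij_betw f3 (fset V) (fset W3)"
    and \<Delta>3: "aeq_ctx \<Delta> id [layer f3 (fset V)] \<Delta>3"
    using C2' by (rule aeq_ctx_add_BrE) (auto intro: that)
  show ?thesis
  proof
    show "flatten_renames (\<lambda>x. if x \<in> fset V then f2 x else x) C1 (flatten_ctx C2)"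
      using flatten_renames_into_brackets[OF \<Gamma>1 \<Gamma>2 W1 \<Delta>1 \<Delta>3] assms(3)
      by (simp add: C1 C2 C2'_eq)
    show "flatten_renames id C2 (flatten_ctx C1)"
      using flatten_renames_out_of_brackets[OF \<Gamma>1 W2 \<Gamma>2 \<Delta>1 W3 \<Delta>3] assms(4)
      by (simp add: C1 C2 C2'_eq)
  qed
qed

theorem proposition5:
  fixes \<Gamma> \<Delta> :: "('f, 'p) ljb_ctx" and A :: "('f, 'p) fm" and V :: "nat fset"
    and \<Sigma>1 \<Sigma>2 :: "('f, 'p) fm multiset" and E1 E2 :: "('f, 'p) fm"
  assumes "fv_fm A \<inter> fset V = {}"
    and "is_flattening (\<Sigma>1, E1) (\<Gamma> + {# Br V \<Delta> #}, A)"
    and "is_flattening (\<Sigma>2, E2) ({# Br V \<Gamma>, Br V \<Delta> #}, A)"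
  shows "abar_equiv (\<Sigma>1, E1) (\<Sigma>2, E2)"
proof -
  obtain C1 where C1: "aeq_ctx (\<Gamma> + {#Br V \<Delta>#}) id [] C1" "aeq_fm A id [] E1" "fresh_ctx C1"
    "fv_fm E1 \<inter> set_mset (bnd_ctx C1) = {}" "\<Sigma>1 = flatten_ctx C1"
    using assms(2) by (rule is_flatteningE)
  obtain C2 where C2: "aeq_ctx {#Br V \<Gamma>, Br V \<Delta>#} id [] C2" "aeq_fm A id [] E2" "fresh_ctx C2"
    "fv_fm E2 \<inter> set_mset (bnd_ctx C2) = {}" "\<Sigma>2 = flatten_ctx C2"
    using assms(3) by (rule is_flatteningE)
  obtain g where into: "flatten_renames (\<lambda>x. if x \<in> fset V then g x else x) C1 (flatten_ctx C2)"
    and out: "flatten_renames id C2 (flatten_ctx C1)"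
    using flatten_renames_bracketings[OF C1(1) C2(1) C1(3) C2(3)] .
  have "x \<in> fv_fm A \<Longrightarrow> (if x \<in> fset V then g x else x) = x" for x
    using assms(1) by auto
  then obtain \<sigma> \<sigma>' where "aeq_lj \<sigma> (\<Sigma>1, E1) (\<Sigma>2, E2)" "aeq_lj \<sigma>' (\<Sigma>2, E2) (\<Sigma>1, E1)"
    using flatten_renames_aeq_lj[OF into C1(4,2) C2(2)] flatten_renames_aeq_lj[OF out C2(4,2) C1(2)]
    unfolding C1(5) C2(5) by auto
  then show ?thesis
    unfolding abar_equiv_def by blast
qed

end
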